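(* Let $V$ be a real Hilbert space, $A$ a closed linear operator on $V$ with domain $U$ and $0\in\rho(A_c)$, and assume (K1), (K2-1)–(K2-4), (B1)–(B3) as in the context. Let $\psi_\star\in\mathcal N(i-A_c)\setminus\{0\}$, let $d\in U$ satisfy $(d,\psi_\star)_{U_c}=1$, and define $l=(l^1,l^2):X\to\mathbb R^2$ by $l^1u=\frac1\pi\int_0^{2\pi}(d,u(t))_U\cos t\,dt$, $l^2u=\frac1\pi\int_0^{2\pi}(d,u(t))_U\sin t\,dt$. Let $u_\star(t):=\mathrm{Re}(\psi_\star e^{it})\in X_1$ and $f^0_{\lambda u}:=h_{\lambda u}(0,0)\in\mathcal L(U,V)$. Then the operator $$S:\mathbb R^2\oplus X_0\oplus X_1\to\mathbb R^2\oplus Y_0\oplus Y_1,\quad S(\lambda,\sigma,u)=\big(l u,\ u_t-Au-\sigma Au_\star-\lambda f^0_{\lambda u}u_\star\big),$$ (with $(f^0_{\lambda u}u_\star)(t)=f^0_{\lambda u}(u_\star(t))$) is bijective.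
   Context: $V_c$, $U_c$ complexifications, $A_c$ the complex-linear extension of $A$; $U=\mathcal D(A)$ is a Hilbert space with $\|u\|_U=\|Au\|_V$ and $(\cdot,\cdot)_{U_c}$ its complexified inner product. $X:=H^1_{per}((0,2\pi),V)\cap L^2((0,2\pi),U)$, $Y:=L^2((0,2\pi),V)$. $X_0=U$ and $Y_0=V$ (constant functions), $X_1=\{a\cos t+b\sin t:a,b\in U\}$, $Y_1=\{a\cos t+b\sin t:a,b\in V\}$. Hypotheses: (K1) $\exists M$: $\|(in-A_c)^{-1}\|_{V_c\to V_c}\le M/n$, $n\ge2$. (K2-1) $h:K\times U\to V$ for an open interval $K\ni0$. (K2-2) $h(\lambda,u(\cdot))\in Y$ for $(\lambda,u)\in K\times X$. (K2-3) $(\lambda,u)\mapsto h(\lambda,u(\cdot))$ is $C^2$ from $K\times X$ to $Y$ (hence $h\in C^2(K\times U,V)$). (K2-4) $h_u(0,0)=0$, $h(\lambda,0)=0$ for $\lambda\in K$. (B1) $\dim\mathcal N(i-A_c)=1=\mathrm{codim}\,\mathcal R(i-A_c)$ and $\mathcal N(i-A_c)\setminus\{0\}$ is disjoint from $\mathcal R(i-A_c)$; hence $A_c+h_u(\lambda,0)$ has a $C^2$ eigenvalue branch $\mu(\lambda)$ with $\mu(0)=i$. (B2) $\mathrm{Re}\,\mu'(0)\neq0$. (B3) $ik\in\rho(A_c)$ for $k\in\mathbb Z\setminus\{\pm1\}$. *)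

theory Defs
  imports "HOL-Analysis.Analysis"
begin

section \<open>Complexification (V_c = V x V, U_c = U x U, x + iy represented as (x,y))\<close>

definition cmult :: "complex \<Rightarrow> 'a::real_vector \<times> 'a \<Rightarrow> 'a \<times> 'a" where
  "cmult z p = (Re z *\<^sub>R fst p - Im z *\<^sub>R snd p, Im z *\<^sub>R fst p + Re z *\<^sub>R snd p)"

definition embc :: "('u \<Rightarrow> 'v) \<Rightarrow> 'u \<times> 'u \<Rightarrow> 'v \<times> 'v" where
  "embc emb p = (emb (fst p), emb (snd p))"

definition opc :: "('u \<Rightarrow> 'v) \<Rightarrow> 'u \<times> 'u \<Rightarrow> 'v \<times> 'v" where
  "opc T p = (T (fst p), T (snd p))"

definition ikA :: "('u \<Rightarrow> 'v::real_vector) \<Rightarrow> ('u \<Rightarrow> 'v) \<Rightarrow> real \<Rightarrow> 'u \<times> 'u \<Rightarrow> 'v \<times> 'v" where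
  "ikA A emb k p = cmult (\<i> * complex_of_real k) (embc emb p) - opc A p"

definition cdim_one :: "('a::real_vector \<times> 'a) set \<Rightarrow> bool" where
  "cdim_one N \<longleftrightarrow> (\<exists>\<psi>. \<psi> \<noteq> 0 \<and> N = range (\<lambda>z. cmult z \<psi>))"

definition ccodim_one :: "('a::real_vector \<times> 'a) set \<Rightarrow> bool" where
  "ccodim_one R \<longleftrightarrow> (\<exists>\<phi>. (\<forall>z. cmult z \<phi> \<in> R \<longrightarrow> z = 0) \<and>
                          (\<forall>v. \<exists>r z. r \<in> R \<and> v = r + cmult z \<phi>))"

abbreviation Mper :: "real measure" where "Mper \<equiv> lebesgue_on {0..2*pi}"

definition strongly_meas :: "(real \<Rightarrow> 'a::topological_space) \<Rightarrow> bool" where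
  "strongly_meas u \<longleftrightarrow> (\<exists>s. (\<forall>n. simple_function Mper (s n)) \<and>
                        (AE t in Mper. (\<lambda>n. s n t) \<longlonglongrightarrow> u t))"

definition L2sp :: "(real \<Rightarrow> 'a::real_normed_vector) \<Rightarrow> bool" where
  "L2sp u \<longleftrightarrow> strongly_meas u \<and> integrable Mper (\<lambda>t. (norm (u t))\<^sup>2)"

definition l2n :: "(real \<Rightarrow> 'a::real_normed_vector) \<Rightarrow> real" where
  "l2n u = sqrt (integral\<^sup>L Mper (\<lambda>t. (norm (u t))\<^sup>2))"

definition per_test :: "(real \<Rightarrow> real) \<Rightarrow> bool" where
  "per_test \<phi> \<longleftrightarrow> (\<forall>t. \<phi> (t + 2*pi) = \<phi> t) \<and> (\<forall>k t. ((deriv ^^ k) \<phi>) differentiable (at t))"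

definition per_weak_deriv :: "(real \<Rightarrow> 'a::real_inner) \<Rightarrow> (real \<Rightarrow> 'a) \<Rightarrow> bool" where
  "per_weak_deriv u w \<longleftrightarrow> (\<forall>\<phi> e. per_test \<phi> \<longrightarrow>
      integral\<^sup>L Mper (\<lambda>t. deriv \<phi> t * inner e (u t)) = - integral\<^sup>L Mper (\<lambda>t. \<phi> t * inner e (w t)))"

text \<open>X = H^1_per((0,2 pi),V) \<inter> L^2((0,2 pi),U), U embedded in V via emb.\<close>
definition Xsp :: "('u::real_normed_vector \<Rightarrow> 'v::real_inner) \<Rightarrow> (real \<Rightarrow> 'u) set" where
  "Xsp emb = {u. L2sp u \<and> L2sp (emb \<circ> u) \<and> (\<exists>w. L2sp w \<and> per_weak_deriv (emb \<circ> u) w)}"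

definition Xn :: "('u::real_normed_vector \<Rightarrow> 'v::real_inner) \<Rightarrow> (real \<Rightarrow> 'u) \<Rightarrow> real" where
  "Xn emb u = l2n u + l2n (emb \<circ> u) + l2n (SOME w. L2sp w \<and> per_weak_deriv (emb \<circ> u) w)"

section \<open>C^2 maps from K x X to Y (Y = L^2((0,2 pi),V)), with respect to the seminorms\<close>

type_synonym ('u) pt = "real \<times> (real \<Rightarrow> 'u)"

definition padd :: "'u pt \<Rightarrow> 'u pt \<Rightarrow> ('u::real_vector) pt" where
  "padd p q = (fst p + fst q, \<lambda>t. snd p t + snd q t)"
definition psub :: "'u pt \<Rightarrow> 'u pt \<Rightarrow> ('u::real_vector) pt" where
  "psub p q = (fst p - fst q, \<lambda>t. snd p t - snd q t)"
definition psc :: "real \<Rightarrow> 'u pt \<Rightarrow> ('u::real_vector) pt" where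
  "psc c p = (c * fst p, \<lambda>t. c *\<^sub>R snd p t)"

definition Pn :: "('u::real_normed_vector \<Rightarrow> 'v::real_inner) \<Rightarrow> 'u pt \<Rightarrow> real" where
  "Pn emb p = \<bar>fst p\<bar> + Xn emb (snd p)"

definition PX :: "('u::real_normed_vector \<Rightarrow> 'v::real_inner) \<Rightarrow> 'u pt set" where
  "PX emb = UNIV \<times> Xsp emb"

text \<open>Bounded linear maps R x X \<rightarrow> Y (linearity modulo null functions).\<close>
definition blin :: "('u::real_normed_vector \<Rightarrow> 'v::real_inner) \<Rightarrow> ('u pt \<Rightarrow> real \<Rightarrow> 'v) \<Rightarrow> bool" where
  "blin emb T \<longleftrightarrow> (\<forall>p\<in>PX emb. L2sp (T p)) \<and>
     (\<forall>p\<in>PX emb. \<forall>q\<in>PX emb. \<forall>a b.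
        l2n (\<lambda>t. T (padd (psc a p) (psc b q)) t - (a *\<^sub>R T p t + b *\<^sub>R T q t)) = 0) \<and>
     (\<exists>C. \<forall>p\<in>PX emb. l2n (T p) \<le> C * Pn emb p)"

definition opn :: "('u::real_normed_vector \<Rightarrow> 'v::real_inner) \<Rightarrow> ('u pt \<Rightarrow> real \<Rightarrow> 'v) \<Rightarrow> real" where
  "opn emb T = Sup {l2n (T p) | p. p \<in> PX emb \<and> Pn emb p \<le> 1}"

definition bbil :: "('u::real_normed_vector \<Rightarrow> 'v::real_inner) \<Rightarrow> ('u pt \<Rightarrow> 'u pt \<Rightarrow> real \<Rightarrow> 'v) \<Rightarrow> bool" where
  "bbil emb B \<longleftrightarrow> (\<forall>p\<in>PX emb. blin emb (B p)) \<and> (\<forall>q\<in>PX emb. blin emb (\<lambda>p. B p q)) \<and>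
     (\<exists>C. \<forall>p\<in>PX emb. \<forall>q\<in>PX emb. l2n (B p q) \<le> C * Pn emb p * Pn emb q)"

definition opn2 :: "('u::real_normed_vector \<Rightarrow> 'v::real_inner) \<Rightarrow> ('u pt \<Rightarrow> 'u pt \<Rightarrow> real \<Rightarrow> 'v) \<Rightarrow> real" where
  "opn2 emb B = Sup {l2n (B p q) | p q. p \<in> PX emb \<and> q \<in> PX emb \<and> Pn emb p \<le> 1 \<and> Pn emb q \<le> 1}"

definition C2_XY :: "('u::real_normed_vector \<Rightarrow> 'v::real_inner) \<Rightarrow> 'u pt set \<Rightarrow> ('u pt \<Rightarrow> real \<Rightarrow> 'v) \<Rightarrow> bool" where
  "C2_XY emb D G \<longleftrightarrow> (\<exists>L1 L2. \<forall>p\<in>D.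
      blin emb (L1 p) \<and>
      (\<forall>\<epsilon>>0. \<exists>\<delta>>0. \<forall>q\<in>D. Pn emb (psub q p) < \<delta> \<longrightarrow>
          l2n (\<lambda>t. G q t - G p t - L1 p (psub q p) t) \<le> \<epsilon> * Pn emb (psub q p)) \<and>
      bbil emb (L2 p) \<and>
      (\<forall>\<epsilon>>0. \<exists>\<delta>>0. \<forall>q\<in>D. Pn emb (psub q p) < \<delta> \<longrightarrow>
          opn emb (\<lambda>r t. L1 q r t - L1 p r t - L2 p (psub q p) r t) \<le> \<epsilon> * Pn emb (psub q p)) \<and>
      (\<forall>\<epsilon>>0. \<exists>\<delta>>0. \<forall>q\<in>D. Pn emb (psub q p) < \<delta> \<longrightarrow>
          opn2 emb (\<lambda>r s t. L2 q r s t - L2 p r s t) \<le> \<epsilon>))"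

end

theory Submission
  imports Defs
begin

text \<open>On constant functions the operator is \<open>-A\<close>, which is invertible. On first harmonics
  \<open>u = Re (q e\<^sup>i\<^sup>t)\<close> it becomes \<open>(\<lambda>, \<sigma>, q) \<mapsto> (l q, (i - A\<^sub>c) q - \<lambda> f \<psi>\<^sub>\<star> - \<sigma> A\<^sub>c \<psi>\<^sub>\<star>)\<close>,
  a bordering of \<open>i - A\<^sub>c\<close>, whose kernel is \<open>\<complex> \<psi>\<^sub>\<star>\<close> and whose range is the kernel of a bounded
  complex functional \<open>\<ell>\<close> (bounded by the open mapping theorem). The normalisation of \<open>d\<close> makes
  \<open>l\<close> an isomorphism on the kernel, and the bordering directions complement the range because
  \<open>\<ell> (A\<^sub>c \<psi>\<^sub>\<star>) = i \<ell> \<psi>\<^sub>\<star>\<close> while, differentiating the eigenvalue equation under \<open>\<ell>\<close>,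
  \<open>\<ell> (f \<psi>\<^sub>\<star>) = \<mu>'(0) \<ell> \<psi>\<^sub>\<star>\<close>; these are \<open>\<real>\<close>-independent exactly when \<open>Re \<mu>'(0) \<noteq> 0\<close>.\<close>

section \<open>The open mapping theorem\<close>

lemma linear_surj_closure_image_ball_interior:
  fixes f :: "'a::real_normed_vector \<Rightarrow> 'b::{real_normed_vector,complete_space}"
  assumes "surj f"
  shows "\<exists>n::nat. interior (closure (f ` ball 0 (real n))) \<noteq> {}"
proof (rule ccontr)
  let ?C = "\<lambda>n::nat. closure (f ` ball 0 (real n))"
  assume "\<nexists>n. interior (?C n) \<noteq> {}"
  then have "euclidean interior_of \<Union>(range ?C) = {}"
    by (intro Baire_category_alt) (auto simp: completely_metrizable_space_euclidean)
  moreover have "\<Union>(range ?C) = UNIV"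
  proof -
    have "y \<in> \<Union>(range ?C)" for y
    proof -
      obtain x where "y = f x" using \<open>surj f\<close> by (metis surjD)
      moreover obtain n :: nat where "norm x < real n" using reals_Archimedean2 by blast
      ultimately have "y \<in> ?C n" using closure_subset by fastforce
      then show ?thesis by blast
    qed
    then show ?thesis by blast
  qed
  ultimately show False by simp
qed

lemma closure_image_ball_approx:
  fixes f :: "'a::real_normed_vector \<Rightarrow> 'b::real_normed_vector"
  assumes lf: "linear f" and r: "ball y0 r \<subseteq> closure (f ` ball 0 R)"
    and y: "norm y < r" and e: "e > 0"
  shows "\<exists>x. norm x < 2 * R \<and> norm (f x - y) < e"
proof -
  have "r > 0" using y norm_ge_zero[of y] by linarith
  then have "y0 + y \<in> ball y0 r" "y0 \<in> ball y0 r" using y by (auto simp: dist_norm)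
  then have "y0 + y \<in> closure (f ` ball 0 R)" "y0 \<in> closure (f ` ball 0 R)" using r by blast+
  then obtain x1 x2 where x12: "x1 \<in> ball 0 R" "dist (f x1) (y0 + y) < e/2"
                               "x2 \<in> ball 0 R" "dist (f x2) y0 < e/2"
    unfolding closure_approachable using half_gt_zero[OF e] by blast
  have "f (x1 - x2) - y = (f x1 - (y0 + y)) - (f x2 - y0)"
    using linear_diff[OF lf] by (simp add: algebra_simps)
  then have "norm (f (x1 - x2) - y) \<le> norm (f x1 - (y0 + y)) + norm (f x2 - y0)"
    by (metis norm_triangle_ineq4)
  then have "norm (f (x1 - x2) - y) < e" using x12 by (simp add: dist_norm)
  moreover have "norm (x1 - x2) < 2 * R"
    using x12 norm_triangle_ineq4[of x1 x2] by simp
  ultimately show ?thesis by blast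
qed

lemma linear_surj_approx_preimage:
  fixes f :: "'a::real_normed_vector \<Rightarrow> 'b::{real_normed_vector,complete_space}"
  assumes lf: "linear f" and sf: "surj f"
  shows "\<exists>M\<ge>0. \<forall>y e. e > 0 \<longrightarrow> (\<exists>x. norm x \<le> M * norm y \<and> norm (f x - y) < e)"
proof -
  obtain n :: nat and y0 where "y0 \<in> interior (closure (f ` ball 0 (real n)))"
    using linear_surj_closure_image_ball_interior[OF sf] by blast
  then obtain r where r: "r > 0" "ball y0 r \<subseteq> closure (f ` ball 0 (real n))"
    by (meson open_contains_ball open_interior interior_subset subset_trans)
  define M where "M = 4 * real n / r"
  have "\<exists>x. norm x \<le> M * norm y \<and> norm (f x - y) < e" if "e > 0" for y e
  proof (cases "y = 0")
    case True
    then show ?thesis using that linear_0[OF lf] by (intro exI[of _ 0]) auto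
  next
    case False
    define c where "c = r / (2 * norm y)"
    have c: "c > 0" "norm (c *\<^sub>R y) < r" using False r by (simp_all add: c_def)
    then obtain x' where x': "norm x' < 2 * real n" "norm (f x' - c *\<^sub>R y) < e * c"
      using closure_image_ball_approx[OF lf r(2)] \<open>e > 0\<close> by (meson mult_pos_pos)
    have "norm ((1/c) *\<^sub>R x') \<le> M * norm y"
      using x' c False r by (simp add: c_def M_def field_simps)
    moreover have "f ((1/c) *\<^sub>R x') - y = (1/c) *\<^sub>R (f x' - c *\<^sub>R y)"
      using c by (simp add: linear_scale[OF lf] algebra_simps)
    then have "norm (f ((1/c) *\<^sub>R x') - y) < e"
      using x' c by (simp add: divide_less_eq)
    ultimately show ?thesis by blast
  qed
  moreover have "M \<ge> 0" using r by (simp add: M_def)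
  ultimately show ?thesis by blast
qed

text \<open>The library states these for \<open>banach\<close>, which the sort \<open>{real_normed_vector, complete_space}\<close>
  of the spaces below does not entail.\<close>

lemma summable_norm_cancel_complete:
  fixes f :: "nat \<Rightarrow> 'a::{real_normed_vector,complete_space}"
  assumes "summable (\<lambda>n. norm (f n))"
  shows "summable f"
proof -
  let ?s = "\<lambda>n. \<Sum>k<n. f k" and ?S = "\<lambda>n. \<Sum>k<n. norm (f k)"
  have tail: "norm (?s m - ?s n) \<le> \<bar>?S m - ?S n\<bar>" if "n \<le> m" for m n
  proof -
    have "?s m - ?s n = (\<Sum>k=n..<m. f k)" "?S m - ?S n = (\<Sum>k=n..<m. norm (f k))"
      using that by (simp_all add: lessThan_atLeast0 sum_diff_nat_ivl)
    then show ?thesis by (simp add: norm_sum sum_nonneg)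
  qed
  have "Cauchy ?S" using assms by (simp add: summable_iff_convergent Cauchy_convergent_iff)
  have "Cauchy ?s"
  proof (rule CauchyI)
    fix e :: real assume "0 < e"
    then obtain M where M: "\<And>m n. m \<ge> M \<Longrightarrow> n \<ge> M \<Longrightarrow> \<bar>?S m - ?S n\<bar> < e"
      using CauchyD[OF \<open>Cauchy ?S\<close>] by (metis real_norm_def)
    have "norm (?s m - ?s n) < e" if "m \<ge> M" "n \<ge> M" for m n
    proof (cases "n \<le> m")
      case True then show ?thesis using tail M that by (meson le_less_trans)
    next
      case False
      then have "norm (?s n - ?s m) < e" using tail M that by (meson le_less_trans nat_le_linear)
      then show ?thesis by (simp add: norm_minus_commute)
    qed
    then show "\<exists>M. \<forall>m\<ge>M. \<forall>n\<ge>M. norm (?s m - ?s n) < e" by blast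
  qed
  then show ?thesis by (simp add: summable_iff_convergent Cauchy_convergent_iff)
qed

lemma summable_norm_le_complete:
  fixes f :: "nat \<Rightarrow> 'a::{real_normed_vector,complete_space}"
  assumes f: "\<And>n. norm (f n) \<le> g n" and g: "summable g"
  shows "summable f" and "norm (suminf f) \<le> suminf g"
proof -
  have "summable (\<lambda>n. norm (f n))" by (rule summable_comparison_test'[OF g]) (simp add: f)
  then show sf: "summable f" by (rule summable_norm_cancel_complete)
  have "norm (\<Sum>k<n. f k) \<le> (\<Sum>k<n. g k)" for n
    by (rule order_trans[OF norm_sum sum_mono[OF f]])
  then show "norm (suminf f) \<le> suminf g"
    by (intro tendsto_le[OF _ summable_LIMSEQ[OF g] tendsto_norm[OF summable_LIMSEQ[OF sf]]]) simp_all
qed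

text \<open>Iterating approximate preimages and summing the geometrically decaying corrections.\<close>

lemma closed_graph_exact_preimage:
  fixes f :: "'a::{real_normed_vector,complete_space} \<Rightarrow> 'b::real_normed_vector"
  assumes lf: "linear f" and cl: "closed (range (\<lambda>x. (x, f x)))" and M: "M \<ge> 0"
    and approx: "\<forall>y e. e > 0 \<longrightarrow> (\<exists>x. norm x \<le> M * norm y \<and> norm (f x - y) < e)"
  shows "\<exists>x. f x = y \<and> norm x \<le> 2 * M * norm y"
proof -
  have "\<exists>x. norm x \<le> M * norm z \<and> norm (f x - z) \<le> norm z / 2" for z
  proof (cases "z = 0")
    case True then show ?thesis using linear_0[OF lf] by (intro exI[of _ 0]) auto
  next
    case False then show ?thesis using approx[rule_format, of "norm z / 2" z] by force
  qed
  then obtain g where g: "\<And>z. norm (g z) \<le> M * norm z" "\<And>z. norm (f (g z) - z) \<le> norm z / 2"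
    by metis
  define r where "r = rec_nat y (\<lambda>_ z. z - f (g z))"
  have r_Suc: "r (Suc k) = r k - f (g (r k))" for k by (simp add: r_def)
  have r_bound: "norm (r k) \<le> norm y * (1/2)^k" for k
  proof (induction k)
    case 0 then show ?case by (simp add: r_def)
  next
    case (Suc k)
    have "norm (r (Suc k)) \<le> norm (r k) / 2"
      using g(2)[of "r k"] by (simp add: r_Suc norm_minus_commute)
    then show ?case using Suc by simp
  qed
  let ?x = "\<lambda>k. g (r k)"
  let ?c = "\<lambda>k. M * norm y * (1/2::real)^k"
  have x_bound: "norm (?x k) \<le> ?c k" for k
    using g(1)[of "r k"] mult_left_mono[OF r_bound[of k] M] by (simp add: mult.assoc)
  have geom: "summable ?c" by (simp add: summable_mult summable_geometric)
  have sx: "summable ?x" and "norm (suminf ?x) \<le> suminf ?c"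
    by (rule summable_norm_le_complete[OF x_bound geom])+
  then have "norm (suminf ?x) \<le> 2 * M * norm y" by (simp add: suminf_mult suminf_geometric)
  have partial: "f (\<Sum>k<n. ?x k) = y - r n" for n
    by (induction n) (simp_all add: r_def linear_0[OF lf] linear_add[OF lf] r_Suc)
  have "r \<longlonglongrightarrow> 0"
    by (rule Lim_null_comparison[where g="\<lambda>k. norm y * (1/2)^k"])
       (use r_bound in \<open>auto intro!: tendsto_mult_right_zero LIMSEQ_power_zero\<close>)
  then have "(\<lambda>n. f (\<Sum>k<n. ?x k)) \<longlonglongrightarrow> y"
    unfolding partial using tendsto_diff[of "\<lambda>_. y" y sequentially r 0] by simp
  then have "(\<lambda>n. ((\<Sum>k<n. ?x k), f (\<Sum>k<n. ?x k))) \<longlonglongrightarrow> (suminf ?x, y)"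
    by (intro tendsto_Pair summable_LIMSEQ sx)
  then have "(suminf ?x, y) \<in> range (\<lambda>x. (x, f x))"
    by (rule closed_sequentially[OF cl, rotated]) auto
  with \<open>norm (suminf ?x) \<le> 2 * M * norm y\<close> show ?thesis by auto
qed

theorem open_mapping_closed_graph:
  fixes f :: "'a::{real_normed_vector,complete_space} \<Rightarrow> 'b::{real_normed_vector,complete_space}"
  assumes "linear f" and "surj f" and "closed (range (\<lambda>x. (x, f x)))"
  shows "\<exists>C. \<forall>y. \<exists>x. f x = y \<and> norm x \<le> C * norm y"
  using linear_surj_approx_preimage[OF assms(1,2)] closed_graph_exact_preimage[OF assms(1,3)]
  by blast

lemma closed_graph_add_continuous:
  fixes T :: "'a::topological_space \<Rightarrow> 'b::real_normed_vector" and g :: "'c::topological_space \<Rightarrow> 'b"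
  assumes "closed (range (\<lambda>p. (p, T p)))" and "continuous_on UNIV g"
  shows "closed (range (\<lambda>x. (x, T (fst x) + g (snd x))))"
proof -
  have graph: "range (\<lambda>x. (x, T (fst x) + g (snd x)))
      = (\<lambda>(x, w). (fst x, w - g (snd x))) -` range (\<lambda>p. (p, T p))"
    by (auto simp: algebra_simps)
  have "continuous_on UNIV (\<lambda>y. g (snd (fst y)))"
    by (rule continuous_on_compose2[OF assms(2)]) (intro continuous_intros, simp)
  then have "continuous_on UNIV (\<lambda>(x, w). (fst x, w - g (snd x)))"
    by (auto simp: split_beta intro!: continuous_intros)
  then show ?thesis unfolding graph by (rule closed_vimage[OF assms(1)])
qed

section \<open>Complexified operators\<close>

lemma cmult_add_left: "cmult (z + w) p = cmult z p + cmult w p"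
  by (simp add: cmult_def algebra_simps)

lemma cmult_scaleR_left: "cmult (r *\<^sub>R z) p = r *\<^sub>R cmult z p"
  by (simp add: cmult_def algebra_simps)

lemma cmult_diff_right: "cmult z (p - q) = cmult z p - cmult z q"
  by (simp add: cmult_def algebra_simps)

lemma cmult_cmult: "cmult z (cmult w p) = cmult (z * w) p"
  by (simp add: cmult_def algebra_simps)

lemma cmult_zero_left [simp]: "cmult 0 p = 0"
  by (simp add: cmult_def zero_prod_def)

lemma continuous_on_cmult_left:
  fixes p :: "'a::real_normed_vector \<times> 'a"
  shows "continuous_on S (\<lambda>z. cmult z p)"
  unfolding cmult_def by (intro continuous_intros)

lemma opc_cmult: "linear f \<Longrightarrow> opc f (cmult z p) = cmult z (opc f p)"
  by (simp add: opc_def cmult_def linear_diff linear_add linear_scale)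

lemma cdim_one_eq_range_cmult:
  assumes "cdim_one N" and "\<psi> \<in> N" and "\<psi> \<noteq> 0"
  shows "N = range (\<lambda>z. cmult z \<psi>)"
proof -
  obtain \<phi> where N: "N = range (\<lambda>z. cmult z \<phi>)" using assms(1) unfolding cdim_one_def by blast
  then obtain w where w: "\<psi> = cmult w \<phi>" using assms(2) by blast
  then have "w \<noteq> 0" using assms(3) by auto
  then have "cmult z \<phi> = cmult (z / w) \<psi>" for z by (simp add: w cmult_cmult)
  then have "cmult z \<phi> \<in> range (\<lambda>z. cmult z \<psi>)" for z by (metis rangeI)
  moreover have "cmult z \<psi> \<in> N" for z unfolding N w cmult_cmult by (rule rangeI)
  ultimately show ?thesis unfolding N by blast
qed

lemma ccodim_one_coordinate:
  assumes lT: "linear T" and cc: "ccodim_one (range T)"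
  obtains \<phi> ell where "\<And>v z. ell v = z \<longleftrightarrow> v - cmult z \<phi> \<in> range T"
proof -
  obtain \<phi> where \<phi>_indep: "\<And>z. cmult z \<phi> \<in> range T \<Longrightarrow> z = 0"
    and \<phi>_span: "\<And>v. \<exists>r z. r \<in> range T \<and> v = r + cmult z \<phi>"
    using cc unfolding ccodim_one_def by blast
  have R: "subspace (range T)" by (rule linear_subspace_image[OF lT subspace_UNIV])
  have ex1: "\<exists>!z. v - cmult z \<phi> \<in> range T" for v
  proof (rule ex_ex1I)
    obtain r z where "r \<in> range T" "v = r + cmult z \<phi>" using \<phi>_span by blast
    then show "\<exists>z. v - cmult z \<phi> \<in> range T" by (intro exI[of _ z]) simp
  next
    fix z w assume "v - cmult z \<phi> \<in> range T" "v - cmult w \<phi> \<in> range T"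
    then have "(v - cmult z \<phi>) - (v - cmult w \<phi>) \<in> range T" by (rule subspace_diff[OF R])
    moreover have "(v - cmult z \<phi>) - (v - cmult w \<phi>) = cmult (w - z) \<phi>"
      by (simp add: cmult_def algebra_simps)
    ultimately have "cmult (w - z) \<phi> \<in> range T" by simp
    then show "z = w" using \<phi>_indep[of "w - z"] by simp
  qed
  define ell where "ell v = (THE z. v - cmult z \<phi> \<in> range T)" for v
  have "ell v = z \<longleftrightarrow> v - cmult z \<phi> \<in> range T" for v z
  proof
    show "ell v = z \<Longrightarrow> v - cmult z \<phi> \<in> range T"
      using theI'[OF ex1[of v]] unfolding ell_def by blast
    show "v - cmult z \<phi> \<in> range T \<Longrightarrow> ell v = z" unfolding ell_def by (rule the1_equality[OF ex1])
  qed
  then show ?thesis by (rule that)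
qed

lemma complement_coordinate_linear:
  assumes lT: "linear T" and cT: "\<And>z p. T (cmult z p) = cmult z (T p)"
    and ell: "\<And>v z. ell v = z \<longleftrightarrow> v - cmult z \<phi> \<in> range T"
  shows "linear ell" and "ell (cmult z v) = z * ell v"
proof -
  have R: "subspace (range T)" by (rule linear_subspace_image[OF lT subspace_UNIV])
  have ell_in: "v - cmult (ell v) \<phi> \<in> range T" for v by (simp add: ell[symmetric])
  show "linear ell"
  proof
    fix v w
    have "(v - cmult (ell v) \<phi>) + (w - cmult (ell w) \<phi>) = (v + w) - cmult (ell v + ell w) \<phi>"
      by (simp add: cmult_add_left algebra_simps)
    then show "ell (v + w) = ell v + ell w"
      using subspace_add[OF R ell_in[of v] ell_in[of w]] by (simp only: ell)
  next
    fix r v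
    have "r *\<^sub>R (v - cmult (ell v) \<phi>) = r *\<^sub>R v - cmult (r *\<^sub>R ell v) \<phi>"
      by (simp add: cmult_scaleR_left scaleR_diff_right)
    then show "ell (r *\<^sub>R v) = r *\<^sub>R ell v"
      using subspace_scale[OF R ell_in[of v], of r] by (simp only: ell)
  qed
  obtain p where "v - cmult (ell v) \<phi> = T p" using ell_in by blast
  then have "cmult z v - cmult (z * ell v) \<phi> = T (cmult z p)"
    by (metis cT cmult_cmult cmult_diff_right)
  then show "ell (cmult z v) = z * ell v" by (simp add: ell)
qed

lemma complement_coordinate_bounded:
  fixes T :: "'a::{real_normed_vector,complete_space} \<times> 'a \<Rightarrow> 'b::{real_normed_vector,complete_space} \<times> 'b"
  assumes lT: "linear T" and clT: "closed (range (\<lambda>p. (p, T p)))"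
    and ell: "\<And>v z. ell v = z \<longleftrightarrow> v - cmult z \<phi> \<in> range T" and l_ell: "linear ell"
  shows "bounded_linear ell"
proof -
  define F where "F x = T (fst x) + cmult (snd x) \<phi>" for x
  have "linear F"
  proof
    show "F (x + y) = F x + F y" for x y
      by (simp add: F_def linear_add[OF lT] cmult_add_left)
    show "F (r *\<^sub>R x) = r *\<^sub>R F x" for r x
      by (simp add: F_def linear_scale[OF lT] cmult_scaleR_left scaleR_add_right)
  qed
  moreover have "v \<in> range F" for v
  proof -
    obtain p where "v - cmult (ell v) \<phi> = T p" using ell by blast
    then have "v = F (p, ell v)" by (simp add: F_def algebra_simps)
    then show ?thesis by blast
  qed
  then have "surj F" by blast
  moreover have "closed (range (\<lambda>x. (x, F x)))"
    unfolding F_def by (rule closed_graph_add_continuous[OF clT continuous_on_cmult_left])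
  ultimately obtain C where C: "\<forall>v. \<exists>x. F x = v \<and> norm x \<le> C * norm v"
    using open_mapping_closed_graph by blast
  have "norm (ell v) \<le> norm v * C" for v
  proof -
    obtain x where x: "F x = v" "norm x \<le> C * norm v" using C by blast
    then have "v - cmult (snd x) \<phi> = T (fst x)" by (auto simp: F_def)
    then have "ell v = snd x" by (simp add: ell)
    then show ?thesis using x(2) norm_snd_le[of "snd x" "fst x"] by (simp add: mult.commute)
  qed
  then show ?thesis
    using l_ell unfolding linear_iff by (intro bounded_linear_intro) auto
qed

lemma ccodim_one_range_functional:
  fixes T :: "'a::{real_normed_vector,complete_space} \<times> 'a \<Rightarrow> 'b::{real_normed_vector,complete_space} \<times> 'b"
  assumes lT: "linear T" and cT: "\<And>z p. T (cmult z p) = cmult z (T p)"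
    and clT: "closed (range (\<lambda>p. (p, T p)))" and cc: "ccodim_one (range T)"
  obtains ell :: "'b \<times> 'b \<Rightarrow> complex"
  where "bounded_linear ell" "\<And>z v. ell (cmult z v) = z * ell v" "\<And>v. ell v = 0 \<longleftrightarrow> v \<in> range T"
proof -
  obtain \<phi> ell where ell: "\<And>v z. ell v = z \<longleftrightarrow> v - cmult z \<phi> \<in> range T"
    using ccodim_one_coordinate[OF lT cc] by blast
  note lin = complement_coordinate_linear[OF lT cT ell]
  show ?thesis
    using that[OF complement_coordinate_bounded[OF lT clT ell lin(1)] lin(2)] ell[of _ 0] by simp
qed

lemma ikA_one_eq: "ikA A emb 1 p = (- emb (snd p) - A (fst p), emb (fst p) - A (snd p))"
  by (simp add: ikA_def cmult_def embc_def opc_def)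

lemma ikA_one_linear: "linear emb \<Longrightarrow> linear A \<Longrightarrow> linear (ikA A emb 1)"
  by (rule linearI) (simp_all add: ikA_one_eq linear_add linear_scale linear_diff algebra_simps)

lemma ikA_one_cmult:
  "linear emb \<Longrightarrow> linear A \<Longrightarrow> ikA A emb 1 (cmult z p) = cmult z (ikA A emb 1 p)"
  by (simp add: ikA_def embc_def opc_cmult[symmetric, unfolded opc_def] opc_cmult cmult_diff_right
      cmult_cmult mult.commute)

lemma ikA_one_closed_graph:
  fixes A emb :: "'u::real_normed_vector \<Rightarrow> 'v::real_normed_vector"
  assumes bA: "bounded_linear A" and injA: "inj A" and cl: "closed (range (\<lambda>u. (emb u, A u)))"
  shows "closed (range (\<lambda>p. (p, ikA A emb 1 p)))"
proof -
  let ?G = "range (\<lambda>u. (emb u, A u))"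
  let ?h = "\<lambda>(p, w). ((- fst w - A (fst p), A (snd p)), (snd w + A (snd p), A (fst p)))"
  have G_iff: "(x, A u) \<in> ?G \<longleftrightarrow> x = emb u" for x u
    using injA by (auto simp: inj_eq)
  have swap: "x + z = - y \<longleftrightarrow> - x - z = y" for x y z :: 'v
    by (metis add_uminus_conv_diff minus_add_distrib minus_minus)
  have "x \<in> range (\<lambda>p. (p, ikA A emb 1 p)) \<longleftrightarrow> x \<in> ?h -` (?G \<times> ?G)" for x
  proof -
    obtain p w where x: "x = (p, w)" by (cases x)
    have "(p, w) \<in> range (\<lambda>p. (p, ikA A emb 1 p)) \<longleftrightarrow> w = ikA A emb 1 p" by auto
    also have "\<dots> \<longleftrightarrow> - fst w - A (fst p) = emb (snd p) \<and> snd w + A (snd p) = emb (fst p)"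
      by (simp only: ikA_one_eq prod_eq_iff fst_conv snd_conv eq_diff_eq swap)
    finally show ?thesis by (simp add: G_iff x)
  qed
  then have "range (\<lambda>p. (p, ikA A emb 1 p)) = ?h -` (?G \<times> ?G)" by blast
  moreover have "continuous_on UNIV ?h"
    by (auto simp: split_beta intro!: continuous_intros bounded_linear.continuous_on[OF bA])
  ultimately show ?thesis by (simp add: closed_vimage closed_Times cl)
qed

lemma ell_opc_eq:
  assumes "\<And>z v. ell (cmult z v) = z * ell v" and "linear ell" and "\<And>p. ell (ikA A emb 1 p) = 0"
  shows "ell (opc A p) = \<i> * ell (embc emb p)"
proof -
  have "0 = ell (cmult \<i> (embc emb p) - opc A p)"
    using assms(3)[of p] by (simp add: ikA_def)
  also have "\<dots> = \<i> * ell (embc emb p) - ell (opc A p)"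
    by (simp add: linear_diff[OF assms(2)] assms(1))
  finally show ?thesis by (simp add: algebra_simps)
qed

lemma ell_eigenvalue_eq:
  assumes "\<And>z v. ell (cmult z v) = z * ell v" and "linear ell" and "\<And>p. ell (ikA A emb 1 p) = 0"
    and "opc (\<lambda>v. A v + B v) p = cmult \<mu> (embc emb p)"
  shows "ell (opc B p) = (\<mu> - \<i>) * ell (embc emb p)"
proof -
  have "opc A p + opc B p = cmult \<mu> (embc emb p)"
    using assms(4) by (simp add: opc_def)
  then have "ell (opc A p) + ell (opc B p) = \<mu> * ell (embc emb p)"
    by (metis linear_add[OF assms(2)] assms(1))
  then show ?thesis
    unfolding ell_opc_eq[OF assms(1-3)] by (simp add: algebra_simps)
qed

section \<open>Derivative of the critical eigenvalue\<close>

lemma has_vector_derivative_imp_diff_quotient: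
  fixes g :: "real \<Rightarrow> 'a::real_normed_vector"
  assumes "(g has_vector_derivative D) (at x)"
  shows "((\<lambda>y. (g y - g x) /\<^sub>R (y - x)) \<longlongrightarrow> D) (at x)"
proof -
  have "((\<lambda>y. ((g y - g x) - (y - x) *\<^sub>R D) /\<^sub>R norm (y - x)) \<longlongrightarrow> 0) (at x)"
    using assms by (simp add: has_vector_derivative_def has_derivative_at_within)
  then have "((\<lambda>y. norm (((g y - g x) - (y - x) *\<^sub>R D) /\<^sub>R norm (y - x))) \<longlongrightarrow> 0) (at x)"
    by (rule tendsto_norm_zero)
  moreover have "\<forall>\<^sub>F y in at x. norm (((g y - g x) - (y - x) *\<^sub>R D) /\<^sub>R norm (y - x))
                             = norm ((g y - g x) /\<^sub>R (y - x) - D)"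
    unfolding eventually_at_filter
  proof (rule always_eventually, intro allI impI)
    fix y assume "y \<noteq> x"
    then have "(g y - g x) /\<^sub>R (y - x) - D = ((g y - g x) - (y - x) *\<^sub>R D) /\<^sub>R (y - x)"
      by (simp add: scaleR_diff_right)
    then show "norm (((g y - g x) - (y - x) *\<^sub>R D) /\<^sub>R norm (y - x)) = norm ((g y - g x) /\<^sub>R (y - x) - D)"
      by simp
  qed
  ultimately have "((\<lambda>y. norm ((g y - g x) /\<^sub>R (y - x) - D)) \<longlongrightarrow> 0) (at x)"
    by (rule Lim_transform_eventually)
  then show ?thesis by (simp add: tendsto_norm_zero_iff LIM_zero_iff)
qed

lemma has_vector_derivative_partial_fst:
  assumes "(f has_derivative f') (at (x, y))"
  shows "((\<lambda>t. f (t, y)) has_vector_derivative f' (1, 0)) (at x)"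
proof -
  have line: "((\<lambda>t. (t, y)) has_derivative (\<lambda>t. (t, 0))) (at x)"
    by (auto intro!: derivative_eq_intros)
  have deriv: "((\<lambda>t. f (t, y)) has_derivative (\<lambda>t. f' (t, 0))) (at x)"
    using has_derivative_compose[OF line assms] .
  have scale: "f' (t *\<^sub>R (1, 0)) = t *\<^sub>R f' (1, 0)" for t
    by (rule linear_scale[OF bounded_linear.linear[OF has_derivative_bounded_linear[OF assms]]])
  have "(\<lambda>t. f' (t, 0)) = (\<lambda>t. t *\<^sub>R f' (1, 0))"
  proof
    fix t
    have "(t, 0) = t *\<^sub>R (1, 0)" by simp
    then show "f' (t, 0) = t *\<^sub>R f' (1, 0)" using scale[of t] by metis
  qed
  then show ?thesis unfolding has_vector_derivative_def using deriv by (simp only:)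
qed

definition blinfun_inr :: "'b::real_normed_vector \<Rightarrow>\<^sub>L ('a::real_normed_vector \<times> 'b)" where
  "blinfun_inr = Blinfun (\<lambda>v. (0, v))"

lemma blinfun_apply_blinfun_inr [simp]: "blinfun_inr v = (0, v)"
  unfolding blinfun_inr_def
  by (subst bounded_linear_Blinfun_apply) (auto intro: bounded_linear_Pair bounded_linear_ident)

text \<open>\<open>emb\<close> is not assumed continuous: the continuity of \<open>\<lambda> \<mapsto> \<ell> (embc emb (\<psi> \<lambda>))\<close> comes
  from \<open>\<ell> \<circ> embc emb = -i \<ell> \<circ> opc A\<close> (\<open>ell_opc_eq\<close>).\<close>

lemma eigenvalue_derivative:
  fixes A :: "'u::real_normed_vector \<Rightarrow> 'v::real_normed_vector" and emb :: "'u \<Rightarrow> 'v"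
    and B :: "real \<Rightarrow> 'u \<Rightarrow>\<^sub>L 'v" and ell :: "'v \<times> 'v \<Rightarrow> complex"
  assumes bA: "bounded_linear A" and bl: "bounded_linear ell"
    and ell_cmult: "\<And>z v. ell (cmult z v) = z * ell v"
    and ell_T: "\<And>p. ell (ikA A emb 1 p) = 0"
    and B: "(B has_vector_derivative B') (at 0)" "B 0 = 0"
    and \<mu>: "(\<mu> has_vector_derivative \<mu>') (at 0)" "\<mu> 0 = \<i>"
    and \<psi>: "isCont \<psi> 0"
    and eig: "\<forall>\<^sub>F la in at 0. opc (\<lambda>v. A v + B la v) (\<psi> la) = cmult (\<mu> la) (embc emb (\<psi> la))"
  shows "\<mu>' * ell (embc emb (\<psi> 0)) = ell (opc B' (\<psi> 0))"
proof -
  have ll: "linear ell" using bl by (rule bounded_linear.linear)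
  have E: "ell (embc emb p) = - \<i> * ell (opc A p)" for p
    by (simp add: ell_opc_eq[OF ell_cmult ll ell_T])
  have lim_left: "((\<lambda>la. ((\<mu> la - \<mu> 0) /\<^sub>R la) * ell (embc emb (\<psi> la)))
                    \<longlongrightarrow> \<mu>' * ell (embc emb (\<psi> 0))) (at 0)"
    unfolding E using has_vector_derivative_imp_diff_quotient[OF \<mu>(1)] \<psi>
    unfolding opc_def isCont_def
    by (intro tendsto_mult tendsto_const bounded_linear.tendsto[OF bl] tendsto_Pair
        bounded_linear.tendsto[OF bA] tendsto_fst tendsto_snd) simp_all
  have lim_right: "((\<lambda>la. ell (opc ((B la - B 0) /\<^sub>R la) (\<psi> la))) \<longlongrightarrow> ell (opc B' (\<psi> 0))) (at 0)"
    using has_vector_derivative_imp_diff_quotient[OF B(1)] \<psi> unfolding opc_def isCont_def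
    by (intro bounded_linear.tendsto[OF bl] tendsto_Pair blinfun.tendsto tendsto_fst tendsto_snd) simp_all
  have "\<forall>\<^sub>F la in at 0. ell (opc ((B la - B 0) /\<^sub>R la) (\<psi> la))
                              = ((\<mu> la - \<mu> 0) /\<^sub>R la) * ell (embc emb (\<psi> la))"
    using eig
  proof (rule eventually_mono)
    fix la assume "opc (\<lambda>v. A v + B la v) (\<psi> la) = cmult (\<mu> la) (embc emb (\<psi> la))"
    then have "ell (opc (B la) (\<psi> la)) = (\<mu> la - \<i>) * ell (embc emb (\<psi> la))"
      by (rule ell_eigenvalue_eq[OF ell_cmult ll ell_T])
    moreover have "opc ((B la - B 0) /\<^sub>R la) (\<psi> la) = inverse la *\<^sub>R opc (B la) (\<psi> la)"
      by (simp add: B(2) opc_def blinfun.scaleR_left)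
    ultimately show "ell (opc ((B la - B 0) /\<^sub>R la) (\<psi> la))
                   = ((\<mu> la - \<mu> 0) /\<^sub>R la) * ell (embc emb (\<psi> la))"
      by (simp add: linear_scale[OF ll] \<mu>(2) mult_scaleR_left)
  qed
  with lim_right have "((\<lambda>la. ((\<mu> la - \<mu> 0) /\<^sub>R la) * ell (embc emb (\<psi> la)))
                          \<longlongrightarrow> ell (opc B' (\<psi> 0))) (at 0)"
    by (rule Lim_transform_eventually)
  then show ?thesis by (rule tendsto_unique[OF at_neq_bot lim_left])
qed

lemma linear_blinfun_apply_zero_Pair: "linear (\<lambda>v. blinfun_apply X (0, v))"
  by (rule linearI) (simp_all add: blinfun.add_right[symmetric] blinfun.scaleR_right[symmetric])

text \<open>The perturbation \<open>h\<^sub>u(\<lambda>, 0)\<close> is \<open>v \<mapsto> D1 (\<lambda>, 0) (0, v)\<close>, so its derivative at \<open>\<lambda> = 0\<close>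
  is \<open>f\<^sup>0\<^sub>\<lambda>\<^sub>u = v \<mapsto> D (1, 0) (0, v)\<close>.\<close>

lemma eigenvalue_derivative_kernel:
  fixes A emb :: "'u::real_normed_vector \<Rightarrow> 'v::real_normed_vector"
    and D1 :: "real \<times> 'u \<Rightarrow> (real \<times> 'u) \<Rightarrow>\<^sub>L 'v"
  assumes emb: "linear emb" and bA: "bounded_linear A" and bl: "bounded_linear ell"
    and ell_cmult: "\<And>z v. ell (cmult z v) = z * ell v"
    and ell_T: "\<And>p. ell (ikA A emb 1 p) = 0"
    and ker: "{p. ikA A emb 1 p = 0} = range (\<lambda>z. cmult z \<psi>\<^sub>0)"
    and D: "(D1 has_derivative blinfun_apply D) (at (0, 0))" "\<And>v. D1 (0, 0) (0, v) = 0"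
    and eig: "\<And>la. la \<in> ball 0 \<epsilon> \<Longrightarrow>
               opc (\<lambda>v. A v + D1 (la, 0) (0, v)) (\<psi> la) = cmult (\<mu> la) (embc emb (\<psi> la))"
    and \<epsilon>: "\<epsilon> > 0" and \<psi>: "\<psi> 0 \<noteq> 0" "isCont \<psi> 0"
    and \<mu>: "\<mu> 0 = \<i>" "(\<mu> has_vector_derivative \<mu>') (at 0)"
  shows "\<mu>' * ell (embc emb \<psi>\<^sub>0) = ell (opc (\<lambda>v. D (1, 0) (0, v)) \<psi>\<^sub>0)"
proof -
  let ?B = "\<lambda>la. D1 (la, 0) o\<^sub>L blinfun_inr"
  have "(?B has_vector_derivative D (1, 0) o\<^sub>L blinfun_inr) (at 0)"
    by (rule bounded_linear.has_vector_derivative[OF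
          bounded_bilinear.bounded_linear_left[OF bounded_bilinear_blinfun_compose]
          has_vector_derivative_partial_fst[OF D(1)]])
  moreover have "?B 0 = 0" using D(2) by (intro blinfun_eqI) simp
  moreover have "\<forall>\<^sub>F la in at 0. opc (\<lambda>v. A v + ?B la v) (\<psi> la) = cmult (\<mu> la) (embc emb (\<psi> la))"
    using eventually_at_ball[OF \<epsilon>] by (rule eventually_mono) (simp add: eig)
  ultimately have deriv: "\<mu>' * ell (embc emb (\<psi> 0)) = ell (opc (D (1, 0) o\<^sub>L blinfun_inr) (\<psi> 0))"
    by (intro eigenvalue_derivative[OF bA bl ell_cmult ell_T _ _ \<mu>(2,1) \<psi>(2)])
  have "ikA A emb 1 (\<psi> 0) = 0"
    using eig[of 0] \<epsilon> \<mu>(1) D(2) by (simp add: ikA_def opc_def)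
  then obtain z where z: "\<psi> 0 = cmult z \<psi>\<^sub>0" using ker by blast
  then have "z \<noteq> 0" using \<psi>(1) by auto
  have "z * (\<mu>' * ell (embc emb \<psi>\<^sub>0)) = z * ell (opc (\<lambda>v. D (1, 0) (0, v)) \<psi>\<^sub>0)"
    using deriv unfolding z embc_def opc_def[symmetric] blinfun_apply_blinfun_compose
      blinfun_apply_blinfun_inr
    by (simp add: opc_cmult[OF linear_blinfun_apply_zero_Pair] opc_cmult[OF emb] ell_cmult algebra_simps)
  then show ?thesis using \<open>z \<noteq> 0\<close> by simp
qed

section \<open>First harmonics\<close>

text \<open>\<open>harmonic a q t = a + Re (q e\<^sup>i\<^sup>t)\<close>, reading \<open>q\<close> as \<open>fst q + i snd q\<close>.\<close>

definition harmonic :: "'a::real_vector \<Rightarrow> 'a \<times> 'a \<Rightarrow> real \<Rightarrow> 'a" where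
  "harmonic a q t = a + cos t *\<^sub>R fst q - sin t *\<^sub>R snd q"

lemma harmonic_eq_iff: "harmonic a q = harmonic a' q' \<longleftrightarrow> a = a' \<and> q = q'"
proof
  assume "harmonic a q = harmonic a' q'"
  then have "harmonic a q t = harmonic a' q' t" for t by simp
  from this[of 0] this[of pi] this[of "pi/2"]
  have e: "a + fst q = a' + fst q'" "a - fst q = a' - fst q'" "a - snd q = a' - snd q'"
    by (simp_all add: harmonic_def)
  then have "(a + fst q) + (a - fst q) = (a' + fst q') + (a' - fst q')" by simp
  then have "2 *\<^sub>R a = 2 *\<^sub>R a'" by (simp add: scaleR_2 algebra_simps)
  then show "a = a' \<and> q = q'" using e by (simp add: prod_eq_iff)
qed simp

lemma range_harmonic:
  "{(\<lambda>t. a + cos t *\<^sub>R b + sin t *\<^sub>R c) | a b c. True} = range (\<lambda>(a, q). harmonic a q)"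
proof -
  have "(\<lambda>t. a + cos t *\<^sub>R b + sin t *\<^sub>R c) = harmonic a (b, - c)" for a b c :: 'a
    by (simp add: harmonic_def fun_eq_iff)
  moreover have "harmonic a q = (\<lambda>t. a + cos t *\<^sub>R fst q + sin t *\<^sub>R (- snd q))" for a :: 'a and q :: "'a \<times> 'a"
    by (simp add: harmonic_def fun_eq_iff)
  ultimately show ?thesis by fastforce
qed

lemma harmonic_zero: "harmonic 0 q t = cos t *\<^sub>R fst q - sin t *\<^sub>R snd q"
  by (simp add: harmonic_def)

lemma linear_harmonic: "linear f \<Longrightarrow> f (harmonic a q t) = harmonic (f a) (opc f q) t"
  by (simp add: harmonic_def opc_def linear_add linear_diff linear_scale)

lemma vector_derivative_harmonic:
  fixes q :: "'a::real_normed_vector \<times> 'a"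
  shows "vector_derivative (harmonic a q) (at t) = harmonic 0 (cmult \<i> q) t"
proof -
  have "(harmonic a q has_vector_derivative (- sin t *\<^sub>R fst q - cos t *\<^sub>R snd q)) (at t)"
    unfolding harmonic_def [abs_def]
    by (auto intro!: derivative_eq_intros)
  then show ?thesis
    by (simp add: vector_derivative_at harmonic_def cmult_def algebra_simps)
qed

lemma has_integral_antiderivative:
  fixes F :: "real \<Rightarrow> real"
  assumes "a \<le> b" and "\<And>t. (F has_real_derivative f t) (at t)" and "F b - F a = c"
  shows "(f has_integral c) {a..b}"
  using fundamental_theorem_of_calculus[OF assms(1), of F f] assms(2,3)
  by (auto simp: has_real_derivative_iff_has_vector_derivative[symmetric]
           intro: has_field_derivative_at_within)

lemma has_integral_trig_2pi:
  shows "((\<lambda>t. cos t) has_integral 0) {0..2*pi}"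
    and "((\<lambda>t. sin t) has_integral 0) {0..2*pi}"
    and "((\<lambda>t. sin t * cos t) has_integral 0) {0..2*pi}"
    and "((\<lambda>t. cos t * cos t) has_integral pi) {0..2*pi}"
    and "((\<lambda>t. sin t * sin t) has_integral pi) {0..2*pi}"
proof -
  have sq: "cos t * cos t = (1 + cos (2*t)) / 2" "sin t * sin t = (1 - cos (2*t)) / 2" for t :: real
    by (simp add: cos_double_cos power2_eq_square) (simp add: cos_double_sin power2_eq_square)
  show "((\<lambda>t. cos t) has_integral 0) {0..2*pi}"
    by (rule has_integral_antiderivative[of 0 "2*pi" sin]) (auto intro!: derivative_eq_intros)
  show "((\<lambda>t. sin t) has_integral 0) {0..2*pi}"
    by (rule has_integral_antiderivative[of 0 "2*pi" "\<lambda>t. - cos t"]) (auto intro!: derivative_eq_intros)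
  show "((\<lambda>t. sin t * cos t) has_integral 0) {0..2*pi}"
    by (rule has_integral_antiderivative[of 0 "2*pi" "\<lambda>t. (sin t)\<^sup>2 / 2"])
       (auto intro!: derivative_eq_intros)
  show "((\<lambda>t. cos t * cos t) has_integral pi) {0..2*pi}"
    unfolding sq
    by (rule has_integral_antiderivative[of 0 "2*pi" "\<lambda>t. t / 2 + sin (2*t) / 4"])
       (auto intro!: derivative_eq_intros simp: sin_periodic_pi2 add_divide_distrib)
  show "((\<lambda>t. sin t * sin t) has_integral pi) {0..2*pi}"
    unfolding sq
    by (rule has_integral_antiderivative[of 0 "2*pi" "\<lambda>t. t / 2 - sin (2*t) / 4"])
       (auto intro!: derivative_eq_intros simp: diff_divide_distrib)
qed

lemma harmonic_fourier_coeffs: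
  fixes d :: "'a::real_inner"
  shows "integral {0..2*pi} (\<lambda>t. inner d (harmonic a q t) * cos t) = pi * inner d (fst q)"
    and "integral {0..2*pi} (\<lambda>t. inner d (harmonic a q t) * sin t) = - pi * inner d (snd q)"
proof -
  have "inner d (harmonic a q t) * cos t
      = inner d a * cos t + inner d (fst q) * (cos t * cos t) - inner d (snd q) * (sin t * cos t)"
    and "inner d (harmonic a q t) * sin t
      = inner d a * sin t + inner d (fst q) * (sin t * cos t) - inner d (snd q) * (sin t * sin t)"
    for t by (simp_all add: harmonic_def inner_add_right inner_diff_right algebra_simps)
  moreover have "((\<lambda>t. inner d a * cos t + inner d (fst q) * (cos t * cos t) - inner d (snd q) * (sin t * cos t))
      has_integral (inner d a * 0 + inner d (fst q) * pi - inner d (snd q) * 0)) {0..2*pi}"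
    and "((\<lambda>t. inner d a * sin t + inner d (fst q) * (sin t * cos t) - inner d (snd q) * (sin t * sin t))
      has_integral (inner d a * 0 + inner d (fst q) * 0 - inner d (snd q) * pi)) {0..2*pi}"
    by (intro has_integral_diff has_integral_add has_integral_mult_right has_integral_trig_2pi)+
  ultimately show "integral {0..2*pi} (\<lambda>t. inner d (harmonic a q t) * cos t) = pi * inner d (fst q)"
    and "integral {0..2*pi} (\<lambda>t. inner d (harmonic a q t) * sin t) = - pi * inner d (snd q)"
    by (simp_all add: integral_unique)
qed

lemma linearization_harmonic:
  assumes "linear emb" and "linear A" and "linear f"
  shows "vector_derivative (emb \<circ> harmonic a q) (at t) - A (harmonic a q t)
           - \<sigma> *\<^sub>R A (harmonic 0 \<psi> t) - la *\<^sub>R f (harmonic 0 \<psi> t)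
         = harmonic (- A a) (ikA A emb 1 q - la *\<^sub>R opc f \<psi> - \<sigma> *\<^sub>R opc A \<psi>) t"
proof -
  have emb_harmonic: "emb \<circ> harmonic a q = harmonic (emb a) (opc emb q)"
    using linear_harmonic[OF assms(1)] by (simp add: fun_eq_iff)
  show ?thesis
    unfolding emb_harmonic vector_derivative_harmonic linear_harmonic[OF assms(2)] linear_harmonic[OF assms(3)]
    by (simp add: harmonic_def ikA_def embc_def opc_def cmult_def linear_0[OF assms(2)] linear_0[OF assms(3)] algebra_simps)
qed

lemma bij_betw_harmonic_transfer:
  fixes S :: "real \<times> real \<times> (real \<Rightarrow> 'a::real_vector) \<Rightarrow> 'r \<times> (real \<Rightarrow> 'b::real_vector)"
  assumes B: "bij B"
    and S: "\<And>la \<sigma> a q. S (la, \<sigma>, harmonic a q) = map_prod id (\<lambda>(b, p). harmonic b p) (B (la, \<sigma>, a, q))"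
  shows "bij_betw S (UNIV \<times> UNIV \<times> range (\<lambda>(a, q). harmonic a q)) (UNIV \<times> range (\<lambda>(b, p). harmonic b p))"
proof -
  have harmonic_bij: "bij_betw (\<lambda>(a, q). harmonic a q) UNIV (range (\<lambda>(a, q). harmonic a q))"
    by (auto simp: bij_betw_def inj_on_def harmonic_eq_iff)
  let ?\<Phi> = "map_prod (id :: real \<Rightarrow> real) (map_prod (id :: real \<Rightarrow> real) (\<lambda>(a, q). harmonic a q))"
  have \<Phi>: "bij_betw ?\<Phi> UNIV (UNIV \<times> UNIV \<times> range (\<lambda>(a, q). harmonic a q))"
    using bij_betw_map_prod[OF bij_betw_id[of "UNIV :: real set"]
        bij_betw_map_prod[OF bij_betw_id[of "UNIV :: real set"] harmonic_bij]] by simp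
  have "bij_betw (map_prod id (\<lambda>(b, p). harmonic b p)) UNIV (UNIV \<times> range (\<lambda>(b, p). harmonic b p))"
    using bij_betw_map_prod[OF bij_betw_id[of UNIV] harmonic_bij] by simp
  then have "bij_betw (map_prod id (\<lambda>(b, p). harmonic b p) \<circ> B) UNIV (UNIV \<times> range (\<lambda>(b, p). harmonic b p))"
    by (rule bij_betw_trans[OF B])
  moreover have "S \<circ> ?\<Phi> = map_prod id (\<lambda>(b, p). harmonic b p) \<circ> B"
    by (auto simp: fun_eq_iff S)
  ultimately show ?thesis by (simp add: bij_betw_comp_iff[OF \<Phi>])
qed

section \<open>Bordered operators\<close>

lemma complex_real_coords_ex1:
  fixes u v :: complex
  assumes "Im (cnj u * v) \<noteq> 0"
  shows "\<exists>!st. z = fst st *\<^sub>R u + snd st *\<^sub>R v"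
proof
  let ?D = "Im (cnj u * v)"
  show "z = fst (- Im (cnj v * z) / ?D, Im (cnj u * z) / ?D) *\<^sub>R u
          + snd (- Im (cnj v * z) / ?D, Im (cnj u * z) / ?D) *\<^sub>R v"
  proof -
    have "(- Im (cnj v * z)) *\<^sub>R u + Im (cnj u * z) *\<^sub>R v = ?D *\<^sub>R z"
      by (simp add: complex_eq_iff algebra_simps)
    then have "z = (1 / ?D) *\<^sub>R ((- Im (cnj v * z)) *\<^sub>R u + Im (cnj u * z) *\<^sub>R v)"
      using assms by simp
    then show ?thesis by (simp add: scaleR_add_right)
  qed
next
  fix st assume z: "z = fst st *\<^sub>R u + snd st *\<^sub>R v"
  let ?D = "Im (cnj u * v)"
  have "Im (cnj u * z) = snd st * ?D" "Im (cnj v * z) = - fst st * ?D"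
    unfolding z by (simp_all add: algebra_simps)
  then show "st = (- Im (cnj v * z) / ?D, Im (cnj u * z) / ?D)"
    using assms by (simp add: prod_eq_iff)
qed

lemma bordered_map_bij:
  fixes T :: "'a::real_vector \<Rightarrow> 'b::real_vector" and \<kappa> :: "'a \<Rightarrow> real \<times> real"
    and \<phi> :: "'b \<Rightarrow> complex"
  assumes lT: "linear T" and l\<kappa>: "linear \<kappa>" and l\<phi>: "linear \<phi>"
    and ker: "bij_betw \<kappa> {x. T x = 0} UNIV"
    and coker: "\<And>y. \<phi> y = 0 \<longleftrightarrow> y \<in> range T"
    and indep: "Im (cnj (\<phi> w\<^sub>1) * \<phi> w\<^sub>2) \<noteq> 0"
  shows "bij (\<lambda>(s, t, x). (\<kappa> x, T x + s *\<^sub>R w\<^sub>1 + t *\<^sub>R w\<^sub>2))"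
proof (rule bijI)
  have \<phi>_comb: "\<phi> (s *\<^sub>R w\<^sub>1 + t *\<^sub>R w\<^sub>2) = s *\<^sub>R \<phi> w\<^sub>1 + t *\<^sub>R \<phi> w\<^sub>2" for s t
    by (simp add: linear_add[OF l\<phi>] linear_scale[OF l\<phi>])
  note coords = complex_real_coords_ex1[OF indep]
  show "inj (\<lambda>(s, t, x). (\<kappa> x, T x + s *\<^sub>R w\<^sub>1 + t *\<^sub>R w\<^sub>2))"
  proof (rule injI, clarsimp)
    fix s t x s' t' x'
    assume \<kappa>_eq: "\<kappa> x = \<kappa> x'" and "T x + s *\<^sub>R w\<^sub>1 + t *\<^sub>R w\<^sub>2 = T x' + s' *\<^sub>R w\<^sub>1 + t' *\<^sub>R w\<^sub>2"
    then have Tx: "T (x - x') = (s' - s) *\<^sub>R w\<^sub>1 + (t' - t) *\<^sub>R w\<^sub>2"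
      by (simp add: linear_diff[OF lT] algebra_simps)
    moreover have "\<phi> (T (x - x')) = 0" using coker by blast
    ultimately have "0 = (s' - s) *\<^sub>R \<phi> w\<^sub>1 + (t' - t) *\<^sub>R \<phi> w\<^sub>2" by (simp add: \<phi>_comb)
    moreover have "(0::complex) = 0 *\<^sub>R \<phi> w\<^sub>1 + 0 *\<^sub>R \<phi> w\<^sub>2" by simp
    ultimately have "(s' - s, t' - t) = (0, 0)" using coords[of 0] by (metis fst_conv snd_conv)
    then have st: "s = s'" "t = t'" by simp_all
    then have "x - x' \<in> {x. T x = 0}" using Tx by simp
    moreover have "\<kappa> (x - x') = \<kappa> 0" using \<kappa>_eq by (simp add: linear_diff[OF l\<kappa>] linear_0[OF l\<kappa>])
    ultimately have "x - x' = 0"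
      using bij_betw_imp_inj_on[OF ker] linear_0[OF lT] by (auto dest: inj_onD)
    then show "s = s' \<and> t = t' \<and> x = x'" using st by simp
  qed
  have "p \<in> range (\<lambda>(s, t, x). (\<kappa> x, T x + s *\<^sub>R w\<^sub>1 + t *\<^sub>R w\<^sub>2))" for p
  proof -
    obtain r y where p: "p = (r, y)" by (cases p)
    obtain st where "\<phi> y = fst st *\<^sub>R \<phi> w\<^sub>1 + snd st *\<^sub>R \<phi> w\<^sub>2" using coords by blast
    then obtain s t where "\<phi> y = s *\<^sub>R \<phi> w\<^sub>1 + t *\<^sub>R \<phi> w\<^sub>2" by blast
    then have "\<phi> (y - (s *\<^sub>R w\<^sub>1 + t *\<^sub>R w\<^sub>2)) = 0" by (simp add: linear_diff[OF l\<phi>] \<phi>_comb)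
    then have "y - (s *\<^sub>R w\<^sub>1 + t *\<^sub>R w\<^sub>2) \<in> range T" by (simp only: coker)
    then obtain x0 where x0: "T x0 = y - (s *\<^sub>R w\<^sub>1 + t *\<^sub>R w\<^sub>2)" by (metis rangeE)
    obtain k where k: "T k = 0" "\<kappa> k = r - \<kappa> x0"
      using bij_betw_imp_surj_on[OF ker] by (metis (mono_tags, lifting) UNIV_I imageE mem_Collect_eq)
    have "(\<kappa> (x0 + k), T (x0 + k) + s *\<^sub>R w\<^sub>1 + t *\<^sub>R w\<^sub>2) = (r, y)"
      using k x0 by (simp add: linear_add[OF lT] linear_add[OF l\<kappa>])
    then show ?thesis unfolding p by (metis (no_types, lifting) case_prod_conv rangeI)
  qed
  then show "surj (\<lambda>(s, t, x). (\<kappa> x, T x + s *\<^sub>R w\<^sub>1 + t *\<^sub>R w\<^sub>2))" by blast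
qed

lemma kernel_coordinates_bij:
  fixes d :: "'a::real_inner"
  assumes ker: "{p. T p = 0} = range (\<lambda>z. cmult z \<psi>)"
    and d: "inner d (fst \<psi>) = 1" "inner d (snd \<psi>) = 0"
  shows "bij_betw (\<lambda>p. (inner d (fst p), - inner d (snd p))) {p. T p = 0} UNIV"
proof -
  let ?\<kappa> = "\<lambda>p. (inner d (fst p), - inner d (snd p))"
  have coords: "?\<kappa> \<circ> (\<lambda>z. cmult z \<psi>) = (\<lambda>z. (Re z, - Im z))"
    using d by (simp add: fun_eq_iff cmult_def inner_diff_right inner_add_right)
  have "bij (\<lambda>z::complex. (Re z, - Im z))"
    by (rule bij_betw_byWitness[where f' = "\<lambda>(x, y). Complex x (- y)"]) (auto simp: complex_eq_iff)
  then have "inj (\<lambda>z. cmult z \<psi>)"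
    unfolding coords[symmetric] by (rule inj_on_imageI2[OF bij_is_inj])
  then have "bij_betw (\<lambda>z. cmult z \<psi>) UNIV {p. T p = 0}"
    unfolding ker by (rule inj_on_imp_bij_betw)
  with \<open>bij (\<lambda>z. (Re z, - Im z))\<close> show ?thesis
    using bij_betw_comp_iff coords by metis
qed

lemma bij_betw_kernel_map_prod:
  assumes "\<And>a. B a = 0 \<longleftrightarrow> a = 0" and "bij_betw \<kappa> {p. T p = 0} UNIV"
  shows "bij_betw (\<lambda>x. \<kappa> (snd x)) {x. map_prod B T x = 0} UNIV"
proof -
  have "map_prod B T x = 0 \<longleftrightarrow> fst x = 0 \<and> T (snd x) = 0" for x
    by (cases x) (simp add: prod_eq_iff assms(1))
  then have "{x. map_prod B T x = 0} = {0} \<times> {p. T p = 0}"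
    by (auto simp: mem_Times_iff)
  moreover have "bij_betw snd ({0} \<times> {p. T p = 0}) {p. T p = 0}"
    by (auto simp: bij_betw_def inj_on_def)
  ultimately show ?thesis
    using assms(2) bij_betw_trans unfolding o_def by fastforce
qed

lemma bij_betw_linearization:
  fixes A emb f0 :: "'u::real_inner \<Rightarrow> 'v::real_inner" and ell :: "'v \<times> 'v \<Rightarrow> complex"
    and \<psi> :: "'u \<times> 'u"
  assumes emb: "linear emb" and A: "linear A" "bij A" and f0: "linear f0"
    and ell: "linear ell" "\<And>z v. ell (cmult z v) = z * ell v"
      "\<And>v. ell v = 0 \<longleftrightarrow> v \<in> range (ikA A emb 1)"
    and ker: "{p. ikA A emb 1 p = 0} = range (\<lambda>z. cmult z \<psi>)"
    and d: "inner d (fst \<psi>) = 1" "inner d (snd \<psi>) = 0"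
    and \<alpha>: "ell (embc emb \<psi>) \<noteq> 0"
    and \<mu>': "Re \<mu>' \<noteq> 0" "\<mu>' * ell (embc emb \<psi>) = ell (opc f0 \<psi>)"
  shows "bij_betw (\<lambda>(la, \<sigma>, u).
           (((1/pi) * integral {0..2*pi} (\<lambda>t. inner d (u t) * cos t),
             (1/pi) * integral {0..2*pi} (\<lambda>t. inner d (u t) * sin t)),
            (\<lambda>t. vector_derivative (emb \<circ> u) (at t) - A (u t)
                 - \<sigma> *\<^sub>R A (harmonic 0 \<psi> t) - la *\<^sub>R f0 (harmonic 0 \<psi> t))))
         (UNIV \<times> UNIV \<times> range (\<lambda>(a, q). harmonic a q)) (UNIV \<times> range (\<lambda>(b, p). harmonic b p))"
    (is "bij_betw ?S _ _")
proof -
  let ?T = "ikA A emb 1"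
  let ?T' = "map_prod (\<lambda>a. - A a) ?T"
  let ?\<kappa> = "\<lambda>x. (inner d (fst (snd x)), - inner d (snd (snd x)))"
  define w\<^sub>1 where "w\<^sub>1 = (0 :: 'v, - opc f0 \<psi>)"
  define w\<^sub>2 where "w\<^sub>2 = (0 :: 'v, - opc A \<psi>)"
  let ?B = "\<lambda>(s, t, x). (?\<kappa> x, ?T' x + s *\<^sub>R w\<^sub>1 + t *\<^sub>R w\<^sub>2)"
  have lT: "linear ?T" by (rule ikA_one_linear[OF emb A(1)])
  have negA0: "- A a = 0 \<longleftrightarrow> a = 0" for a
    using bij_is_inj[OF A(2)] linear_0[OF A(1)] by (metis injD neg_equal_0_iff_equal)
  have "linear ?T'"
    by (rule linearI) (simp_all add: map_prod_def split_beta linear_add[OF lT] linear_scale[OF lT]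
        linear_add[OF A(1)] linear_scale[OF A(1)])
  moreover have "linear ?\<kappa>"
    by (rule linearI) (simp_all add: inner_add_right)
  moreover have "linear (\<lambda>y. ell (snd y))"
    by (rule linear_compose[OF linear_snd ell(1), unfolded o_def])
  moreover have "bij_betw ?\<kappa> {x. ?T' x = 0} UNIV"
    by (rule bij_betw_kernel_map_prod[OF negA0 kernel_coordinates_bij[OF ker d]])
  moreover have "ell (snd y) = 0 \<longleftrightarrow> y \<in> range ?T'" for y
  proof -
    have "surj (\<lambda>a. - A a)"
      using bij_is_surj[OF A(2)] by (metis surj_def minus_minus)
    then have "range ?T' = UNIV \<times> range ?T"
      by (metis UNIV_Times_UNIV map_prod_surj_on)
    then show ?thesis by (simp add: ell(3) mem_Times_iff)
  qed
  moreover have "Im (cnj (ell (snd w\<^sub>1)) * ell (snd w\<^sub>2)) \<noteq> 0"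
  proof -
    let ?\<alpha> = "ell (embc emb \<psi>)"
    have "ell (snd w\<^sub>1) = - (\<mu>' * ?\<alpha>)" "ell (snd w\<^sub>2) = - (\<i> * ?\<alpha>)"
      using ell_opc_eq[OF ell(2,1), of A emb] ell(3) \<mu>'(2)
      by (simp_all add: w\<^sub>1_def w\<^sub>2_def linear_neg[OF ell(1)])
    then have "Im (cnj (ell (snd w\<^sub>1)) * ell (snd w\<^sub>2)) = Re \<mu>' * ((Re ?\<alpha>)\<^sup>2 + (Im ?\<alpha>)\<^sup>2)"
      by (simp add: power2_eq_square algebra_simps)
    then show ?thesis using \<alpha> \<mu>'(1) complex_neq_0 by force
  qed
  ultimately have "bij ?B"
    by (rule bordered_map_bij)
  moreover have "?S (la, \<sigma>, harmonic a q) = map_prod id (\<lambda>(b, p). harmonic b p) (?B (la, \<sigma>, a, q))"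
    for la \<sigma> a q
  proof -
    have "?S (la, \<sigma>, harmonic a q)
        = (?\<kappa> (a, q), harmonic (- A a) (?T q - la *\<^sub>R opc f0 \<psi> - \<sigma> *\<^sub>R opc A \<psi>))"
      by (simp add: harmonic_fourier_coeffs linearization_harmonic[OF emb A(1) f0])
    also have "\<dots> = map_prod id (\<lambda>(b, p). harmonic b p) (?B (la, \<sigma>, a, q))"
      by (simp add: w\<^sub>1_def w\<^sub>2_def algebra_simps)
    finally show ?thesis .
  qed
  ultimately show ?thesis by (rule bij_betw_harmonic_transfer)
qed

theorem lemma4p1:
  fixes A :: "'u::{real_inner,complete_space} \<Rightarrow> 'v::{real_inner,complete_space}"
    and emb :: "'u \<Rightarrow> 'v"
    and K :: "real set"
    and h :: "real \<Rightarrow> 'u \<Rightarrow> 'v"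
    and D1 :: "real \<times> 'u \<Rightarrow> (real \<times> 'u) \<Rightarrow>\<^sub>L 'v"
    and D2 :: "real \<times> 'u \<Rightarrow> (real \<times> 'u) \<Rightarrow>\<^sub>L ((real \<times> 'u) \<Rightarrow>\<^sub>L 'v)"
    and \<psi>s :: "'u \<times> 'u"
    and d :: 'u
  assumes emb_lin: "linear emb" and emb_inj: "inj emb"
    and A_lin: "linear A"
    and U_norm: "\<And>u. norm (A u) = norm u"
    and A_closed: "closed (range (\<lambda>u. (emb u, A u)))"
    and zero_res: "bij A"
    \<comment> \<open>(K1)\<close>
    and K1: "\<exists>M. \<forall>n::nat. n \<ge> 2 \<longrightarrow> bij (ikA A emb (real n)) \<and>
              (\<forall>p. norm (embc emb p) \<le> M / real n * norm (ikA A emb (real n) p))"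
    \<comment> \<open>(K2-1): K open interval containing 0; h : K x U \<rightarrow> V by typing\<close>
    and K_int: "\<exists>a b. K = {a<..<b}" and K0: "0 \<in> K"
    \<comment> \<open>(K2-2)\<close>
    and K22: "\<forall>la\<in>K. \<forall>u\<in>Xsp emb. L2sp (\<lambda>t. h la (u t))"
    \<comment> \<open>(K2-3): C^2 from K x X to Y ...\<close>
    and K23: "C2_XY emb (K \<times> Xsp emb) (\<lambda>p t. h (fst p) (snd p t))"
    \<comment> \<open>... and hence C^2 from K x U to V, with derivatives D1, D2\<close>
    and hD1: "\<forall>x\<in>K \<times> UNIV. ((\<lambda>p. h (fst p) (snd p)) has_derivative blinfun_apply (D1 x)) (at x)"
    and hD2: "\<forall>x\<in>K \<times> UNIV. (D1 has_derivative blinfun_apply (D2 x)) (at x)"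
    and hD2_cont: "continuous_on (K \<times> UNIV) D2"
    \<comment> \<open>(K2-4)\<close>
    and K24a: "\<forall>v. blinfun_apply (D1 (0, 0)) (0, v) = 0"
    and K24b: "\<forall>la\<in>K. h la 0 = 0"
    \<comment> \<open>(B1)\<close>
    and B1a: "cdim_one {p. ikA A emb 1 p = 0}"
    and B1b: "ccodim_one (range (ikA A emb 1))"
    and B1c: "\<forall>p. ikA A emb 1 p = 0 \<and> p \<noteq> 0 \<longrightarrow> embc emb p \<notin> range (ikA A emb 1)"
    \<comment> \<open>(B2): the eigenvalue branch \<mu> of A_c + h_u(\<lambda>,0) with \<mu>(0) = i has Re \<mu>'(0) \<noteq> 0\<close>
    and B2: "\<exists>\<epsilon>>0. \<exists>\<mu>::real \<Rightarrow> complex. \<exists>\<psi>::real \<Rightarrow> 'u \<times> 'u.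
              ball 0 \<epsilon> \<subseteq> K \<and>
              (\<forall>la\<in>ball 0 \<epsilon>. \<psi> la \<noteq> 0 \<and>
                 opc (\<lambda>v. A v + blinfun_apply (D1 (la, 0)) (0, v)) (\<psi> la) = cmult (\<mu> la) (embc emb (\<psi> la))) \<and>
              continuous (at 0) \<psi> \<and> \<mu> 0 = \<i> \<and> (\<exists>dmu. (\<mu> has_vector_derivative dmu) (at 0) \<and> Re dmu \<noteq> 0)"
    \<comment> \<open>(B3)\<close>
    and B3: "\<forall>k::int. k \<noteq> 1 \<and> k \<noteq> -1 \<longrightarrow> bij (ikA A emb (real_of_int k))"
    \<comment> \<open>\<psi>_* \<in> N(i - A_c) \ {0} and (d, \<psi>_* )_{U_c} = 1\<close>
    and psi_ker: "ikA A emb 1 \<psi>s = 0" and psi_nz: "\<psi>s \<noteq> 0"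
    and d_norm: "inner d (fst \<psi>s) = 1 \<and> inner d (snd \<psi>s) = 0"
  shows "let l1 = (\<lambda>u::real \<Rightarrow> 'u. (1/pi) * integral {0..2*pi} (\<lambda>t. inner d (u t) * cos t));
             l2 = (\<lambda>u::real \<Rightarrow> 'u. (1/pi) * integral {0..2*pi} (\<lambda>t. inner d (u t) * sin t));
             ustar = (\<lambda>t. cos t *\<^sub>R fst \<psi>s - sin t *\<^sub>R snd \<psi>s);
             f0 = (\<lambda>v. blinfun_apply (blinfun_apply (D2 (0, 0)) (1, 0)) (0, v));
             X01 = {(\<lambda>t. a + cos t *\<^sub>R b + sin t *\<^sub>R c) | a b c. True};
             Y01 = {(\<lambda>t. a + cos t *\<^sub>R b + sin t *\<^sub>R c) | a b c. True};
             S = (\<lambda>(la, \<sigma>, u). ((l1 u, l2 u),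
                    (\<lambda>t. vector_derivative (emb \<circ> u) (at t) - A (u t)
                         - \<sigma> *\<^sub>R A (ustar t) - la *\<^sub>R f0 (ustar t))))
         in bij_betw S (UNIV \<times> UNIV \<times> X01) (UNIV \<times> Y01)"
proof -
  let ?T = "ikA A emb 1"
  have bA: "bounded_linear A"
    using U_norm by (intro bounded_linear_intro[where K = 1]) (simp_all add: linear_add[OF A_lin] linear_scale[OF A_lin])
  obtain ell where ell: "bounded_linear ell" "\<And>z v. ell (cmult z v) = z * ell v"
      "\<And>v. ell v = 0 \<longleftrightarrow> v \<in> range ?T"
    using ccodim_one_range_functional[OF ikA_one_linear[OF emb_lin A_lin] ikA_one_cmult[OF emb_lin A_lin]
        ikA_one_closed_graph[OF bA bij_is_inj[OF zero_res] A_closed] B1b] by blast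
  have ker: "{p. ?T p = 0} = range (\<lambda>z. cmult z \<psi>s)"
    using cdim_one_eq_range_cmult[OF B1a] psi_ker psi_nz by simp
  obtain \<epsilon> \<mu> \<psi> \<mu>' where \<epsilon>: "\<epsilon> > 0"
    and eig: "\<And>la. la \<in> ball 0 \<epsilon> \<Longrightarrow> \<psi> la \<noteq> 0 \<and>
               opc (\<lambda>v. A v + D1 (la, 0) (0, v)) (\<psi> la) = cmult (\<mu> la) (embc emb (\<psi> la))"
    and \<psi>: "isCont \<psi> 0" and \<mu>: "\<mu> 0 = \<i>" "(\<mu> has_vector_derivative \<mu>') (at 0)" "Re \<mu>' \<noteq> 0"
    using B2 by blast
  have ell_T: "ell (?T p) = 0" for p using ell(3) by blast
  have hD2_0: "(D1 has_derivative D2 (0, 0)) (at (0, 0))" using hD2 K0 by simp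
  have \<psi>0: "\<psi> 0 \<noteq> 0" using eig \<epsilon> by simp
  have \<mu>'_eq: "\<mu>' * ell (embc emb \<psi>s) = ell (opc (\<lambda>v. D2 (0, 0) (1, 0) (0, v)) \<psi>s)"
    using eig by (intro eigenvalue_derivative_kernel[OF emb_lin bA ell(1,2) ell_T ker hD2_0
        K24a[rule_format] _ \<epsilon> \<psi>0 \<psi> \<mu>(1,2)]) blast
  have \<alpha>: "ell (embc emb \<psi>s) \<noteq> 0" using B1c psi_ker psi_nz ell(3) by blast
  show ?thesis
    unfolding Let_def range_harmonic harmonic_zero[symmetric]
    by (rule bij_betw_linearization[OF emb_lin A_lin zero_res linear_blinfun_apply_zero_Pair
          bounded_linear.linear[OF ell(1)] ell(2,3) ker d_norm[THEN conjunct1] d_norm[THEN conjunct2]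
          \<alpha> \<mu>(3) \<mu>'_eq])
qed

end
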